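(* Let $1\le k<n$ and $A\in\mathbb{M}_n$. Then $$\mathcal{P}(A)=\bigcup\{e^{i\theta}S(P):\ \theta\in[0,2\pi),\ P \text{ a rank-}k\text{ orthogonal projection with } |\operatorname{tr}(AP)|=w_k(A)\}.$$
   Context: For $A\in\mathbb{M}_n$: $W_k(A)=\{\operatorname{tr}(AP): P=P^*=P^2,\operatorname{tr}P=k\}$, $w_k(A)=\max\{|z|:z\in W_k(A)\}$. $A\parallel B$ means $w_k(A+\mu B)=w_k(A)+w_k(B)$ for some $|\mu|=1$. $\mathcal{P}(A)=\{B\in\mathbb{M}_n: B\parallel A\}$. For a rank-$k$ orthogonal projection $P$, $S(P)=\{B\in\mathbb{M}_n:\operatorname{tr}(BP)=w_k(B)\}$. *)

theory Defs
  imports "HOL-Analysis.Analysis"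
begin

text \<open>Complex n x n matrices are modelled as complex^'n^'n (n = CARD('n)).\<close>

definition cmat_adj :: "complex^'n^'n \<Rightarrow> complex^'n^'n" where
  "cmat_adj A = (\<chi> i j. cnj (A $ j $ i))"

definition cmat_scale :: "complex \<Rightarrow> complex^'n^'n \<Rightarrow> complex^'n^'n" where
  "cmat_scale c A = (\<chi> i j. c * A $ i $ j)"

definition orth_projs :: "nat \<Rightarrow> (complex^'n^'n) set" where
  "orth_projs k = {P. P = cmat_adj P \<and> P ** P = P \<and> trace P = of_nat k}"

definition kNumRange :: "nat \<Rightarrow> complex^'n^'n \<Rightarrow> complex set" where
  "kNumRange k A = {trace (A ** P) | P. P \<in> orth_projs k}"

definition kNumRadius :: "nat \<Rightarrow> complex^'n^'n \<Rightarrow> real" where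
  "kNumRadius k A = Sup (cmod ` kNumRange k A)"

definition kParallel :: "nat \<Rightarrow> complex^'n^'n \<Rightarrow> complex^'n^'n \<Rightarrow> bool" where
  "kParallel k A B \<longleftrightarrow> (\<exists>\<mu>. cmod \<mu> = 1 \<and>
      kNumRadius k (A + cmat_scale \<mu> B) = kNumRadius k A + kNumRadius k B)"

definition parSet :: "nat \<Rightarrow> complex^'n^'n \<Rightarrow> (complex^'n^'n) set" where
  "parSet k A = {B. kParallel k B A}"

definition SP :: "nat \<Rightarrow> complex^'n^'n \<Rightarrow> (complex^'n^'n) set" where
  "SP k P = {B. trace (B ** P) = complex_of_real (kNumRadius k B)}"

end

theory Submission
  imports Defs
begin

text \<open>The set of rank-\<open>k\<close> orthogonal projections is compact, so \<open>w\<^sub>k(M)\<close> is attained at some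
  projection \<open>P\<close>, and \<open>w\<^sub>k\<close> is an absolutely homogeneous subadditive function of \<open>M\<close>. Hence
  \<open>B \<parallel> A\<close> holds iff a single projection \<open>P\<close> maximizes both \<open>|tr(BP)|\<close> and \<open>|tr(AP)|\<close>: if
  \<open>w\<^sub>k(B + \<mu>A) = w\<^sub>k(B) + w\<^sub>k(A)\<close> is attained at \<open>P\<close>, the triangle inequality is tight at \<open>P\<close>;
  conversely a common maximizer and \<open>\<mu>\<close> aligning the phases of \<open>tr(BP)\<close> and \<open>tr(AP)\<close>
  give equality. Finally \<open>|tr(BP)| = w\<^sub>k(B)\<close> says exactly that \<open>exp(-i\<theta>) B \<in> S(P)\<close> for the
  phase \<open>\<theta>\<close> of \<open>tr(BP)\<close>.\<close>

lemma trace_cmat_scale_mult: "trace (cmat_scale c X ** P) = c * trace (X ** P)"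
  by (simp add: trace_def cmat_scale_def matrix_matrix_mult_def sum_distrib_left mult.assoc)

lemma trace_add_mult: "trace ((X + Y) ** P) = trace (X ** P) + trace (Y ** P)"
  by (simp add: trace_def matrix_matrix_mult_def distrib_right sum.distrib)

lemma cmat_scale_cmat_scale: "cmat_scale a (cmat_scale b X) = cmat_scale (a * b) X"
  by (simp add: cmat_scale_def mult.assoc)

lemma cmat_scale_one: "cmat_scale 1 X = X"
  by (simp add: cmat_scale_def vec_eq_iff)

lemma exists_polar_form:
  "\<exists>\<theta>\<in>{0..<2*pi}. z = complex_of_real (cmod z) * exp (\<i> * complex_of_real \<theta>)"
  using Arg2pi[of z] unfolding is_Arg_def by auto

lemma exp_i_real_inverse:
  "exp (\<i> * complex_of_real t) * exp (- (\<i> * complex_of_real t)) = 1"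
  by (simp add: exp_minus)

lemma norm_exp_minus_i_real: "cmod (exp (- (\<i> * complex_of_real t))) = 1"
  by (metis mult_minus_right norm_exp_i_times of_real_minus)

lemma orth_projs_sum_norm_squares:
  assumes "P \<in> orth_projs k"
  shows "(\<Sum>i\<in>UNIV. \<Sum>j\<in>UNIV. (cmod (P$i$j))\<^sup>2) = real k"
proof -
  have herm: "P = cmat_adj P" and idem: "P ** P = P" and tr: "trace P = of_nat k"
    using assms unfolding orth_projs_def by blast+
  have adj: "P$j$i = cnj (P$i$j)" for i j
    using arg_cong[OF herm, of "\<lambda>M. M$j$i"] unfolding cmat_adj_def by simp
  have diag: "P$i$i = of_real (\<Sum>j\<in>UNIV. (cmod (P$i$j))\<^sup>2)" for i
  proof -
    have "P$i$i = (P ** P)$i$i" by (simp only: idem)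
    also have "\<dots> = (\<Sum>j\<in>UNIV. P$i$j * cnj (P$i$j))"
      unfolding matrix_matrix_mult_def vec_lambda_beta
      by (rule sum.cong[OF refl]) (simp only: adj[of _ i])
    also have "\<dots> = (\<Sum>j\<in>UNIV. of_real ((cmod (P$i$j))\<^sup>2))"
      by (simp only: complex_norm_square)
    finally show ?thesis by simp
  qed
  have "complex_of_real (real k) = of_real (\<Sum>i\<in>UNIV. \<Sum>j\<in>UNIV. (cmod (P$i$j))\<^sup>2)"
    using tr unfolding trace_def diag by simp
  then show ?thesis by (simp only: of_real_eq_iff)
qed

lemma orth_projs_entry_bound:
  assumes "P \<in> orth_projs k"
  shows "cmod (P$i$j) \<le> real k + 1"
proof -
  have "(cmod (P$i$j))\<^sup>2 \<le> (\<Sum>j\<in>UNIV. (cmod (P$i$j))\<^sup>2)"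
    by (rule member_le_sum) auto
  also have "\<dots> \<le> (\<Sum>i\<in>UNIV. \<Sum>j\<in>UNIV. (cmod (P$i$j))\<^sup>2)"
    by (rule member_le_sum[where f="\<lambda>i. \<Sum>j\<in>UNIV. (cmod (P$i$j))\<^sup>2"]) (auto intro: sum_nonneg)
  finally have "(cmod (P$i$j))\<^sup>2 \<le> real k"
    using orth_projs_sum_norm_squares[OF assms] by simp
  moreover have "0 \<le> (cmod (P$i$j) - 1)\<^sup>2" by simp
  ultimately show ?thesis unfolding power2_diff by simp
qed

lemma bounded_orth_projs: "bounded (orth_projs k :: (complex^'n^'n) set)"
proof -
  have "norm P \<le> real CARD('n) * (real CARD('n) * (real k + 1))"
    if P: "P \<in> orth_projs k" for P :: "complex^'n^'n"
  proof -
    have row: "norm (P$i) \<le> real CARD('n) * (real k + 1)" for i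
    proof -
      have "norm (P$i) \<le> (\<Sum>j\<in>UNIV. cmod (P$i$j))"
        unfolding norm_vec_def by (rule L2_set_le_sum) auto
      also have "\<dots> \<le> (\<Sum>j\<in>(UNIV::'n set). real k + 1)"
        by (rule sum_mono) (rule orth_projs_entry_bound[OF P])
      finally show ?thesis by simp
    qed
    have "norm P \<le> (\<Sum>i\<in>UNIV. norm (P$i))"
      unfolding norm_vec_def by (rule L2_set_le_sum) auto
    also have "\<dots> \<le> (\<Sum>i\<in>(UNIV::'n set). real CARD('n) * (real k + 1))"
      by (rule sum_mono) (rule row)
    finally show ?thesis by simp
  qed
  then show ?thesis unfolding bounded_iff by blast
qed

lemma closed_orth_projs: "closed (orth_projs k :: (complex^'n^'n) set)"
proof -
  have entry: "continuous_on UNIV (\<lambda>P::complex^'n^'n. P $ i $ j)" for i j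
    by (intro continuous_on_component continuous_on_id)
  have "continuous_on UNIV (cmat_adj :: complex^'n^'n \<Rightarrow> _)"
    unfolding cmat_adj_def by (intro continuous_on_vec_lambda continuous_on_cnj entry)
  moreover have "continuous_on UNIV (\<lambda>P::complex^'n^'n. P ** P)"
    unfolding matrix_matrix_mult_def
    by (intro continuous_on_vec_lambda continuous_on_sum continuous_on_mult entry)
  moreover have "continuous_on UNIV (trace :: complex^'n^'n \<Rightarrow> _)"
    unfolding trace_def by (intro continuous_on_sum entry)
  ultimately have "closed
      ({P. P = cmat_adj P} \<inter> {P. P ** P = P} \<inter> {P::complex^'n^'n. trace P = of_nat k})"
    by (intro closed_Int closed_Collect_eq continuous_on_id continuous_on_const)
  moreover have "orth_projs k =
      {P. P = cmat_adj P} \<inter> {P. P ** P = P} \<inter> {P::complex^'n^'n. trace P = of_nat k}"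
    unfolding orth_projs_def by blast
  ultimately show ?thesis by simp
qed

lemma compact_orth_projs: "compact (orth_projs k :: (complex^'n^'n) set)"
  using bounded_orth_projs closed_orth_projs compact_eq_bounded_closed by blast

lemma orth_projs_nonempty:
  assumes "k \<le> CARD('n)"
  shows "orth_projs k \<noteq> ({} :: (complex^'n^'n) set)"
proof -
  obtain S :: "'n set" where S: "card S = k"
    using obtain_subset_with_card_n[of k "UNIV::'n set"] assms by auto
  define P :: "complex^'n^'n" where "P = (\<chi> i j. if i = j \<and> i \<in> S then 1 else 0)"
  have "P = cmat_adj P" unfolding P_def cmat_adj_def by (simp add: vec_eq_iff)
  moreover have "P ** P = P"
  proof -
    have "(\<Sum>l\<in>UNIV. (if i = l \<and> i \<in> S then 1 else 0) * (if l = j \<and> l \<in> S then 1 else 0))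
       = (\<Sum>l\<in>UNIV. if l = i then (if i = j \<and> i \<in> S then 1 else 0) else (0::complex))" for i j
      by (rule sum.cong) auto
    then show ?thesis unfolding P_def matrix_matrix_mult_def by (simp add: vec_eq_iff)
  qed
  moreover have "trace P = of_nat k"
    unfolding P_def trace_def using S by (simp add: sum.If_cases)
  ultimately have "P \<in> orth_projs k" unfolding orth_projs_def by blast
  then show ?thesis by blast
qed

lemma continuous_on_norm_trace_mult:
  "continuous_on S (\<lambda>P::complex^'n^'n. cmod (trace (M ** P)))"
proof -
  have "(\<lambda>P::complex^'n^'n. cmod (trace (M ** P))) =
      (\<lambda>P. cmod (\<Sum>i\<in>UNIV. \<Sum>l\<in>UNIV. M$i$l * P$l$i))"
    by (simp add: trace_def matrix_matrix_mult_def)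
  then show ?thesis
    by (simp only:) (intro continuous_on_norm continuous_on_sum continuous_on_mult
        continuous_on_const continuous_on_component continuous_on_id)
qed

lemma kNumRadius_attained:
  assumes "k \<le> CARD('n)"
  obtains P where "P \<in> orth_projs k" "kNumRadius k M = cmod (trace (M ** P))"
    and "\<And>Q. Q \<in> orth_projs k \<Longrightarrow> cmod (trace (M ** Q)) \<le> kNumRadius k (M::complex^'n^'n)"
proof -
  obtain P where P: "P \<in> orth_projs k"
    and max: "\<forall>Q\<in>orth_projs k. cmod (trace (M ** Q)) \<le> cmod (trace (M ** P))"
    using continuous_attains_sup[OF compact_orth_projs orth_projs_nonempty[OF assms]
        continuous_on_norm_trace_mult] by blast
  have "cmod ` kNumRange k M = (\<lambda>Q. cmod (trace (M ** Q))) ` orth_projs k"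
    unfolding kNumRange_def by auto
  then have "kNumRadius k M = cmod (trace (M ** P))"
    unfolding kNumRadius_def by (simp only:) (rule cSup_eq_maximum, use P max in auto)
  with P max that show ?thesis by auto
qed

lemma norm_trace_mult_le_kNumRadius:
  assumes "k \<le> CARD('n)" and "P \<in> orth_projs k"
  shows "cmod (trace (M ** P)) \<le> kNumRadius k (M::complex^'n^'n)"
  using kNumRadius_attained[OF assms(1), of M] assms(2) by metis

lemma kNumRadius_nonneg:
  assumes "k \<le> CARD('n)"
  shows "0 \<le> kNumRadius k (M::complex^'n^'n)"
  using kNumRadius_attained[OF assms, of M] by (metis norm_ge_zero)

lemma kNumRadius_cmat_scale:
  assumes "k \<le> CARD('n)"
  shows "kNumRadius k (cmat_scale c M) = cmod c * kNumRadius k (M::complex^'n^'n)"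
proof -
  obtain P where "P \<in> orth_projs k" "kNumRadius k M = cmod (trace (M ** P))"
    using kNumRadius_attained[OF assms] by blast
  then have "cmod c * kNumRadius k M \<le> kNumRadius k (cmat_scale c M)"
    using norm_trace_mult_le_kNumRadius[OF assms, of P "cmat_scale c M"]
    by (simp add: trace_cmat_scale_mult norm_mult)
  moreover obtain Q where "Q \<in> orth_projs k"
    "kNumRadius k (cmat_scale c M) = cmod (trace (cmat_scale c M ** Q))"
    using kNumRadius_attained[OF assms] by blast
  then have "kNumRadius k (cmat_scale c M) \<le> cmod c * kNumRadius k M"
    using norm_trace_mult_le_kNumRadius[OF assms, of Q M]
    by (simp add: trace_cmat_scale_mult norm_mult mult_left_mono)
  ultimately show ?thesis by linarith
qed

lemma kNumRadius_add_le:
  assumes "k \<le> CARD('n)"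
  shows "kNumRadius k (X + Y) \<le> kNumRadius k X + kNumRadius k (Y::complex^'n^'n)"
proof -
  obtain P where P: "P \<in> orth_projs k" "kNumRadius k (X + Y) = cmod (trace ((X + Y) ** P))"
    using kNumRadius_attained[OF assms] by blast
  have "cmod (trace ((X + Y) ** P)) \<le> cmod (trace (X ** P)) + cmod (trace (Y ** P))"
    unfolding trace_add_mult by (rule norm_triangle_ineq)
  moreover have "cmod (trace (X ** P)) \<le> kNumRadius k X" "cmod (trace (Y ** P)) \<le> kNumRadius k Y"
    using norm_trace_mult_le_kNumRadius[OF assms P(1)] by auto
  ultimately show ?thesis using P(2) by linarith
qed

lemma kParallel_imp_common_maximizer:
  assumes "k \<le> CARD('n)" and "kParallel k B (A::complex^'n^'n)"
  shows "\<exists>P\<in>orth_projs k. cmod (trace (B ** P)) = kNumRadius k B \<and>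
           cmod (trace (A ** P)) = kNumRadius k A"
proof -
  obtain \<mu> where \<mu>: "cmod \<mu> = 1"
    and sum: "kNumRadius k (B + cmat_scale \<mu> A) = kNumRadius k B + kNumRadius k A"
    using assms(2) unfolding kParallel_def by blast
  obtain P where P: "P \<in> orth_projs k"
    and attained: "kNumRadius k (B + cmat_scale \<mu> A) = cmod (trace ((B + cmat_scale \<mu> A) ** P))"
    using kNumRadius_attained[OF assms(1)] by blast
  define b where "b = trace (B ** P)"
  define a where "a = trace (A ** P)"
  have "cmod b \<le> kNumRadius k B" "cmod a \<le> kNumRadius k A"
    unfolding a_def b_def using norm_trace_mult_le_kNumRadius[OF assms(1) P] by auto
  moreover have "cmod (b + \<mu> * a) \<le> cmod b + cmod a"
    using norm_triangle_ineq[of b "\<mu> * a"] by (simp add: norm_mult \<mu>)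
  moreover have "cmod (b + \<mu> * a) = kNumRadius k B + kNumRadius k A"
    using attained sum unfolding a_def b_def trace_add_mult trace_cmat_scale_mult by simp
  ultimately have "cmod b = kNumRadius k B" "cmod a = kNumRadius k A" by linarith+
  then show ?thesis using P unfolding a_def b_def by blast
qed

lemma common_maximizer_imp_kParallel:
  assumes "k \<le> CARD('n)" and "P \<in> orth_projs k"
    and B: "cmod (trace (B ** P)) = kNumRadius k B"
    and A: "cmod (trace (A ** P)) = kNumRadius k (A::complex^'n^'n)"
  shows "kParallel k B A"
proof -
  obtain \<theta> where \<theta>: "trace (B ** P) = of_real (kNumRadius k B) * exp (\<i> * of_real \<theta>)"
    using exists_polar_form[of "trace (B ** P)"] B by auto
  obtain \<phi> where \<phi>: "trace (A ** P) = of_real (kNumRadius k A) * exp (\<i> * of_real \<phi>)"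
    using exists_polar_form[of "trace (A ** P)"] A by auto
  define \<mu> where "\<mu> = exp (\<i> * of_real \<theta>) * exp (- (\<i> * of_real \<phi>))"
  have \<mu>: "cmod \<mu> = 1"
    unfolding \<mu>_def norm_mult norm_exp_minus_i_real by simp
  have "trace ((B + cmat_scale \<mu> A) ** P) =
      exp (\<i> * of_real \<theta>) * of_real (kNumRadius k B + kNumRadius k A)"
    unfolding trace_add_mult trace_cmat_scale_mult \<theta> \<phi> \<mu>_def
    by (simp add: algebra_simps exp_i_real_inverse flip: mult.assoc)
  then have "cmod (trace ((B + cmat_scale \<mu> A) ** P)) = kNumRadius k B + kNumRadius k A"
    using kNumRadius_nonneg[OF assms(1)] by (simp add: norm_mult del: of_real_add)
  then have "kNumRadius k B + kNumRadius k A \<le> kNumRadius k (B + cmat_scale \<mu> A)"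
    using norm_trace_mult_le_kNumRadius[OF assms(1,2)] by metis
  moreover have "kNumRadius k (B + cmat_scale \<mu> A) \<le> kNumRadius k B + kNumRadius k A"
    using kNumRadius_add_le[OF assms(1), of B "cmat_scale \<mu> A"]
    unfolding kNumRadius_cmat_scale[OF assms(1)] \<mu> by simp
  ultimately show ?thesis
    unfolding kParallel_def using \<mu> by (intro exI[of _ \<mu>]) simp
qed

lemma kParallel_iff_common_maximizer:
  assumes "k \<le> CARD('n)"
  shows "kParallel k B (A::complex^'n^'n) \<longleftrightarrow>
    (\<exists>P\<in>orth_projs k. cmod (trace (B ** P)) = kNumRadius k B \<and>
                      cmod (trace (A ** P)) = kNumRadius k A)"
  using kParallel_imp_common_maximizer[OF assms] common_maximizer_imp_kParallel[OF assms]
  by blast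

lemma rotated_SP_iff_maximizer:
  assumes "k \<le> CARD('n)"
  shows "(\<exists>\<theta>\<in>{0..<2*pi}. B \<in> cmat_scale (exp (\<i> * complex_of_real \<theta>)) ` SP k P) \<longleftrightarrow>
    cmod (trace (B ** P)) = kNumRadius k (B::complex^'n^'n)"
proof
  assume "\<exists>\<theta>\<in>{0..<2*pi}. B \<in> cmat_scale (exp (\<i> * complex_of_real \<theta>)) ` SP k P"
  then obtain \<theta> C where C: "trace (C ** P) = of_real (kNumRadius k C)"
    and BC: "B = cmat_scale (exp (\<i> * complex_of_real \<theta>)) C"
    unfolding SP_def by blast
  have "cmod (trace (B ** P)) = kNumRadius k C"
    unfolding BC trace_cmat_scale_mult C norm_mult
    using kNumRadius_nonneg[OF assms, of C] by simp
  also have "\<dots> = kNumRadius k B"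
    unfolding BC kNumRadius_cmat_scale[OF assms] by simp
  finally show "cmod (trace (B ** P)) = kNumRadius k B" .
next
  assume B: "cmod (trace (B ** P)) = kNumRadius k B"
  obtain \<theta> where \<theta>: "\<theta> \<in> {0..<2*pi}"
    and polar: "trace (B ** P) = of_real (kNumRadius k B) * exp (\<i> * of_real \<theta>)"
    using exists_polar_form[of "trace (B ** P)"] B by auto
  define C where "C = cmat_scale (exp (- (\<i> * complex_of_real \<theta>))) B"
  have "trace (C ** P) = of_real (kNumRadius k B)"
    unfolding C_def trace_cmat_scale_mult polar
    by (metis exp_i_real_inverse mult.commute mult.left_commute mult_1_right)
  also have "kNumRadius k B = kNumRadius k C"
    unfolding C_def kNumRadius_cmat_scale[OF assms] norm_exp_minus_i_real by simp
  finally have "C \<in> SP k P" unfolding SP_def by blast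
  moreover have "B = cmat_scale (exp (\<i> * complex_of_real \<theta>)) C"
    unfolding C_def cmat_scale_cmat_scale exp_i_real_inverse cmat_scale_one ..
  ultimately show "\<exists>\<theta>\<in>{0..<2*pi}. B \<in> cmat_scale (exp (\<i> * complex_of_real \<theta>)) ` SP k P"
    using \<theta> by blast
qed

theorem mainTheorem3:
  fixes A :: "complex^'n^'n" and k :: nat
  assumes "1 \<le> k" and "k < CARD('n)"
  shows "parSet k A =
    \<Union> {cmat_scale (exp (\<i> * complex_of_real \<theta>)) ` SP k P | \<theta> P.
          \<theta> \<in> {0..<2*pi} \<and> P \<in> orth_projs k \<and> cmod (trace (A ** P)) = kNumRadius k A}"
proof (rule set_eqI)
  fix B
  have k: "k \<le> CARD('n)" using assms(2) by simp
  have "B \<in> parSet k A \<longleftrightarrow>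
      (\<exists>P\<in>orth_projs k. cmod (trace (B ** P)) = kNumRadius k B \<and>
                        cmod (trace (A ** P)) = kNumRadius k A)"
    unfolding parSet_def using kParallel_iff_common_maximizer[OF k] by simp
  also have "\<dots> \<longleftrightarrow> (\<exists>P\<in>orth_projs k. cmod (trace (A ** P)) = kNumRadius k A \<and>
      (\<exists>\<theta>\<in>{0..<2*pi}. B \<in> cmat_scale (exp (\<i> * complex_of_real \<theta>)) ` SP k P))"
    using rotated_SP_iff_maximizer[OF k] by blast
  finally show "B \<in> parSet k A \<longleftrightarrow> B \<in> \<Union> {cmat_scale (exp (\<i> * complex_of_real \<theta>)) ` SP k P
      | \<theta> P. \<theta> \<in> {0..<2*pi} \<and> P \<in> orth_projs k \<and> cmod (trace (A ** P)) = kNumRadius k A}"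
    by blast
qed

end
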